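(* Let $m\ge n$, $B\in\mathbb R^{n\times m}$ of full row rank, $f,h$ convex and continuously differentiable with Lipschitz gradients, $\mathcal L(u,p)=f(u)-h(p)+(Bu,p)$ with saddle point $(u^*,p^* )$, and $T_{\mathcal U},\mathcal I_{\mathcal V}$ ($m\times m$), $T_{\mathcal P},\mathcal I_{\mathcal Q}$ ($n\times n$) symmetric positive definite. Suppose $h\in\mathcal S^{1,1}_{\mu_{h,T_{\mathcal P}},L_{h,T_{\mathcal P}}}$ w.r.t. $T_{\mathcal P}$ with $L_{h,T_{\mathcal P}}\le1$, $f\in\mathcal S^{1,1}_{\mu_{f,T_{\mathcal U}},L_{f,T_{\mathcal U}}}$ w.r.t. $T_{\mathcal U}$ with $L_{f,T_{\mathcal U}}\le1$, $f_B$ is strongly convex w.r.t. $\mathcal I_{\mathcal V}$ with $\mu_{f_B,\mathcal I_{\mathcal V}}>0$, and $h_B$ is strongly convex w.r.t. $\mathcal I_{\mathcal Q}$ with $\mu_{h_B,\mathcal I_{\mathcal Q}}>0$. Let $(u_k,p_k)$ be generated from $(u_0,p_0)$ by $$u_{k+1/2}=u_k-T_{\mathcal U}^{-1}(\nabla f(u_k)+B^\top p_k),\quad p_{k+1}=p_k-\alpha_k\mathcal I_{\mathcal Q}^{-1}(\nabla h(p_k)-Bu_{k+1/2}),\quad u_{k+1}=\arg\min_{u\in\mathbb R^m}\tilde f_B(u;u_k,p_{k+1}),$$ where $\tilde f_B(u;u_k,p_{k+1})=f_B(u)+\frac1{2\alpha_k}\|u-u_k+\alpha_k\mathcal I_{\mathcal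 V}^{-1}B^\top(p_{k+1}-T_{\mathcal P}^{-1}\nabla h(p_{k+1}))\|^2_{\mathcal I_{\mathcal V}}$. Then for $0<\alpha_k<\mu_{h_B,\mathcal I_{\mathcal Q}}/L_{S,\mathcal Q}^2$, $$\mathcal E(u_{k+1},p_{k+1})\le\frac1{1+\alpha_k\mu_k}\mathcal E(u_k,p_k),\qquad \mu_k=\min\{\mu_{f_B,\mathcal I_{\mathcal V}},\ \mu_{h_B,\mathcal I_{\mathcal Q}}-\alpha_kL_{S,\mathcal Q}^2\},$$ where $L_{S,\mathcal Q}^2=L_{h_B,\mathcal I_{\mathcal Q}}^2+L_{e_{\mathcal U},\mathcal I_{\mathcal V}}^2L_S^2$. In particular, for $\alpha_k=0.5\mu_{h_B,\mathcal I_{\mathcal Q}}/L_{S,\mathcal Q}^2$, $$\mathcal E(u_{k+1},p_{k+1})\le\frac{1}{1+0.5\,\mu_{h_B,\mathcal I_{\mathcal Q}}\min\{\mu_{f_B,\mathcal I_{\mathcal V}},\mu_{h_B,\mathcal I_{\mathcal Q}}/2\}/L_{S,\mathcal Q}^2}\mathcal E(u_k,p_k).$$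
   Context: A saddle point satisfies $\nabla f(u^* )+B^\top p^*=0$, $Bu^*=\nabla h(p^* )$. For SPD $M$, $\|x\|_M=(Mx,x)^{1/2}$; $D_g(y,x)=g(y)-g(x)-(\nabla g(x),y-x)$; $g\in\mathcal S^{1,1}_{\mu_{g,M},L_{g,M}}$ w.r.t. $M$ means $\frac{\mu_{g,M}}2\|x-y\|_M^2\le D_g(y,x)\le\frac{L_{g,M}}2\|x-y\|_M^2$ for all $x,y$. Define $f_B(u)=f(u)+\frac12(B^\top T_{\mathcal P}^{-1}Bu,u)$, $h_B(p)=h(p)+\frac12(BT_{\mathcal U}^{-1}B^\top p,p)$, $e_{\mathcal U}(u)=u-T_{\mathcal U}^{-1}\nabla f(u)$, $\mathcal E(u,p)=\frac12\|u-u^*\|^2_{\mathcal I_{\mathcal V}}+\frac12\|p-p^*\|^2_{\mathcal I_{\mathcal Q}}$. $L_{h_B,\mathcal I_{\mathcal Q}}$ is the Lipschitz constant of $\nabla h_B$ ($\|\nabla h_B(p_1)-\nabla h_B(p_2)\|_{\mathcal I_{\mathcal Q}^{-1}}\le L_{h_B,\mathcal I_{\mathcal Q}}\|p_1-p_2\|_{\mathcal I_{\mathcal Q}}$), $L_{e_{\mathcal U},\mathcal I_{\mathcal V}}$ the Lipschitz constant of $e_{\mathcal U}$ in $\|\cdot\|_{\mathcal I_{\mathcal V}}$, and $L_S^2=\lambda_{\max}(\mathcal I_{\mathcal Q}^{-1}B\mathcal I_{\mathcal V}^{-1}B^\top)$. *)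

theory Defs
  imports "HOL-Analysis.Analysis"
begin

definition mnorm2 :: "real^'m^'m \<Rightarrow> real^'m \<Rightarrow> real" where
  "mnorm2 M x = (M *v x) \<bullet> x"

definition spd :: "real^'m^'m \<Rightarrow> bool" where
  "spd M \<longleftrightarrow> transpose M = M \<and> (\<forall>x. x \<noteq> 0 \<longrightarrow> (M *v x) \<bullet> x > 0)"

definition bregman :: "(real^'m \<Rightarrow> real) \<Rightarrow> (real^'m \<Rightarrow> real^'m) \<Rightarrow> real^'m \<Rightarrow> real^'m \<Rightarrow> real" where
  "bregman g gg y x = g y - g x - gg x \<bullet> (y - x)"

definition S11 :: "(real^'m \<Rightarrow> real) \<Rightarrow> (real^'m \<Rightarrow> real^'m) \<Rightarrow> real^'m^'m \<Rightarrow> real \<Rightarrow> real \<Rightarrow> bool" where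
  "S11 g gg M mu L \<longleftrightarrow> (\<forall>x y. mu / 2 * mnorm2 M (x - y) \<le> bregman g gg y x
                              \<and> bregman g gg y x \<le> L / 2 * mnorm2 M (x - y))"

definition strongly_convex_wrt :: "real^'m^'m \<Rightarrow> real \<Rightarrow> (real^'m \<Rightarrow> real) \<Rightarrow> bool" where
  "strongly_convex_wrt M mu g \<longleftrightarrow> convex_on UNIV (\<lambda>x. g x - mu / 2 * mnorm2 M x)"

definition lambda_max :: "real^'n^'n \<Rightarrow> real" where
  "lambda_max A = Max {c. \<exists>v. v \<noteq> 0 \<and> A *v v = c *s v}"

end

theory Submission
  imports Defs
begin

(* Write z = (u, p), F_u(u, p) = grad f_B(u) + B^T (p - T_P^-1 grad h(p)) and
   F_p(u, p) = grad h_B(p) - B e_U(u); both vanish at the saddle point z*, whose components are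
   u* and p*. The u-update is the implicit step I_V (u_{k+1} - u_k) = - alpha F_u(z_{k+1}) and the
   p-update the explicit step I_Q (p_{k+1} - p_k) = - alpha F_p(z_k). Expanding the energy of z_k
   around z_{k+1} therefore gives

     2 E(z_k) = 2 E(z_{k+1}) + 2 alpha <F(z_{k+1}), z_{k+1} - z*>
                + 2 alpha <F_p(z_k) - F_p(z_{k+1}), p_{k+1} - p*>
                + |u_{k+1} - u_k|^2 + |p_{k+1} - p_k|^2.

   Strong convexity of f_B and h_B, together with the cocoercivity of grad f and grad h that the
   bounds L <= 1 provide, makes F strongly monotone: the terms coupling u and p through B cancel up
   to Young's inequality, leaving alpha (mu_fB |u_{k+1} - u*|^2 + mu_hB |p_{k+1} - p*|^2). The
   lagged term is bounded by the Lipschitz constants of grad h_B and e_U and by the Rayleigh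
   quotient bound |B v|^2 <= L_S^2 |v|^2, so Young's inequality absorbs it into the two increments
   at the price alpha^2 L_{S,Q}^2 |p_{k+1} - p*|^2. *)

section \<open>Weighted norms and positive definite matrices\<close>

lemma inner_matrix_vector_transpose:
  "((A::real^'m^'n) *v x) \<bullet> y = x \<bullet> (transpose A *v y)"
  by (metis dot_lmul_matrix vector_transpose_matrix)

lemma symmetric_inner_commute:
  "transpose M = M \<Longrightarrow> ((M::real^'n^'n) *v x) \<bullet> y = (M *v y) \<bullet> x"
  by (metis inner_commute inner_matrix_vector_transpose)

lemma transpose_congruence_symmetric:
  "transpose S = S \<Longrightarrow>
    transpose (transpose C ** S ** C) = transpose C ** (S::real^'n^'n) ** (C::real^'m^'n)"
  by (simp add: matrix_transpose_mul matrix_mul_assoc)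

lemma transpose_diff: "transpose (A - C) = transpose A - transpose (C::real^'n^'m)"
  by (simp add: transpose_def vec_eq_iff)

lemma congruence_matrix_vector_mult:
  "(transpose C ** S ** C) *v x = transpose C *v (S *v (C *v x))"
  by (simp only: matrix_vector_mul_assoc matrix_mul_assoc)

lemma mnorm2_minus_commute: "mnorm2 M (x - y) = mnorm2 M (y - x)"
  unfolding mnorm2_def
  by (simp add: matrix_vector_mult_diff_distrib inner_diff_left inner_diff_right)

lemma mnorm2_scaleR: "mnorm2 M (c *\<^sub>R x) = c\<^sup>2 * mnorm2 M x"
  unfolding mnorm2_def by (simp add: matrix_vector_mult_scaleR power2_eq_square)

lemma mnorm2_diff:
  "transpose M = M \<Longrightarrow> mnorm2 M (a - b) = mnorm2 M a - 2 * ((M *v b) \<bullet> a) + mnorm2 M b"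
  unfolding mnorm2_def
  by (simp add: matrix_vector_mult_diff_distrib inner_diff_left inner_diff_right
      symmetric_inner_commute)

definition psd :: "real^'n^'n \<Rightarrow> bool" where
  "psd M \<longleftrightarrow> transpose M = M \<and> (\<forall>x. 0 \<le> mnorm2 M x)"

lemma spd_symmetric: "spd M \<Longrightarrow> transpose M = M"
  unfolding spd_def by blast

lemma spd_mnorm2_pos: "spd M \<Longrightarrow> x \<noteq> 0 \<Longrightarrow> 0 < mnorm2 M x"
  unfolding spd_def mnorm2_def by blast

lemma spd_imp_psd: "spd M \<Longrightarrow> psd M"
  unfolding psd_def
  by (metis spd_symmetric spd_mnorm2_pos less_imp_le mnorm2_def inner_zero_right order_refl)

lemma spd_mnorm2_nonneg: "spd M \<Longrightarrow> 0 \<le> mnorm2 M x"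
  using spd_imp_psd psd_def by blast

lemma spd_invertible: "spd (M::real^'n^'n) \<Longrightarrow> invertible M"
  by (metis spd_def inner_zero_left less_irrefl matrix_left_invertible_ker invertible_left_inverse)

lemma invertible_matrix_inv:
  assumes "invertible (M::real^'n^'n)"
  shows "M ** matrix_inv M = mat 1" and "matrix_inv M ** M = mat 1"
proof -
  have "\<exists>A. M ** A = mat 1 \<and> A ** M = mat 1"
    using assms invertible_def by blast
  from someI_ex[OF this] show "M ** matrix_inv M = mat 1" "matrix_inv M ** M = mat 1"
    unfolding matrix_inv_def by auto
qed

lemma matrix_inv_cancel:
  assumes "invertible (M::real^'n^'n)"
  shows "M *v (matrix_inv M *v x) = x" and "matrix_inv M *v (M *v x) = x"
  using invertible_matrix_inv[OF assms] by (simp_all add: matrix_vector_mul_assoc)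

lemma transpose_matrix_inv:
  assumes "invertible (M::real^'n^'n)"
  shows "transpose (matrix_inv M) = matrix_inv (transpose M)"
proof -
  have "transpose (matrix_inv M) ** transpose M = mat 1"
    by (metis invertible_matrix_inv(1)[OF assms] matrix_transpose_mul transpose_mat)
  then have "transpose (matrix_inv M) ** transpose M ** matrix_inv (transpose M)
      = matrix_inv (transpose M)"
    by (simp add: matrix_mul_lid)
  then show ?thesis
    using invertible_matrix_inv(1)[OF transpose_invertible[OF assms]]
    by (simp add: matrix_mul_assoc[symmetric] matrix_mul_rid)
qed

lemma spd_matrix_inv:
  assumes "spd (M::real^'n^'n)"
  shows "spd (matrix_inv M)"
  unfolding spd_def
proof (intro conjI allI impI)
  have inv: "invertible M" using assms by (rule spd_invertible)
  then show "transpose (matrix_inv M) = matrix_inv M"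
    using transpose_matrix_inv spd_symmetric[OF assms] by metis
  fix x :: "real^'n" assume "x \<noteq> 0"
  then have "matrix_inv M *v x \<noteq> 0"
    by (metis inv matrix_inv_cancel(1) matrix_vector_mult_0_right)
  then have "0 < mnorm2 M (matrix_inv M *v x)"
    using spd_mnorm2_pos[OF assms] by blast
  then show "0 < (matrix_inv M *v x) \<bullet> x"
    unfolding mnorm2_def matrix_inv_cancel(1)[OF inv] by (simp add: inner_commute)
qed

lemma mnorm2_matrix_inv:
  assumes "spd (M::real^'n^'n)"
  shows "mnorm2 M (matrix_inv M *v x) = mnorm2 (matrix_inv M) x"
    and "mnorm2 (matrix_inv M) (M *v x) = mnorm2 M x"
  unfolding mnorm2_def matrix_inv_cancel[OF spd_invertible[OF assms]]
  by (simp_all add: inner_commute)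

lemma psd_young:
  assumes "psd M"
  shows "\<bar>2 * ((M *v a) \<bullet> b)\<bar> \<le> mnorm2 M a + mnorm2 M b"
proof -
  have sym: "(M *v b) \<bullet> a = (M *v a) \<bullet> b"
    using assms psd_def symmetric_inner_commute by metis
  have "0 \<le> mnorm2 M (a - b)" "0 \<le> mnorm2 M (a + b)"
    using assms psd_def by blast+
  then show ?thesis
    unfolding mnorm2_def
    by (simp add: matrix_vector_mult_diff_distrib matrix_vector_right_distrib inner_diff_left
        inner_diff_right inner_add_left inner_add_right sym abs_le_iff)
qed

lemma quadratic_nonneg_discriminant:
  fixes X Y Z :: real
  assumes "\<And>s. 0 \<le> s\<^sup>2 * X - 2 * s * Y + Z" and "0 \<le> X"
  shows "Y\<^sup>2 \<le> X * Z"
proof (cases "X = 0")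
  case True
  show ?thesis
  proof (cases "Y = 0")
    case False
    have "0 \<le> ((Z + 1) / (2 * Y))\<^sup>2 * X - 2 * ((Z + 1) / (2 * Y)) * Y + Z"
      by (rule assms(1))
    with True False show ?thesis by (simp add: field_simps)
  qed (simp add: True)
next
  case False
  then have "0 < X" using assms(2) by simp
  have "0 \<le> X * ((Y / X)\<^sup>2 * X - 2 * (Y / X) * Y + Z)"
    by (metis assms(1) \<open>0 < X\<close> less_imp_le mult_nonneg_nonneg)
  also have "\<dots> = X * Z - Y\<^sup>2"
    using \<open>0 < X\<close> by (simp add: field_simps power2_eq_square)
  finally show ?thesis by simp
qed

lemma psd_cauchy_schwarz:
  assumes "psd M"
  shows "((M *v a) \<bullet> b)\<^sup>2 \<le> mnorm2 M a * mnorm2 M b"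
proof (rule quadratic_nonneg_discriminant)
  fix s :: real
  have sym: "(M *v b) \<bullet> a = (M *v a) \<bullet> b"
    using assms psd_def symmetric_inner_commute by metis
  have "0 \<le> mnorm2 M (s *\<^sub>R a - b)"
    using assms psd_def by blast
  then show "0 \<le> s\<^sup>2 * mnorm2 M a - 2 * s * ((M *v a) \<bullet> b) + mnorm2 M b"
    unfolding mnorm2_def
    by (simp add: matrix_vector_mult_diff_distrib matrix_vector_mult_scaleR inner_diff_left
        inner_diff_right sym power2_eq_square algebra_simps)
qed (use assms psd_def in blast)

lemma psd_mnorm2_eq_0:
  assumes "psd M" and "mnorm2 M x = 0"
  shows "M *v x = 0"
proof -
  have "((M *v x) \<bullet> (M *v x))\<^sup>2 \<le> 0"
    using psd_cauchy_schwarz[OF assms(1), of x "M *v x"] assms(2) by simp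
  then show ?thesis by simp
qed

lemma inner_square_le_dual_mnorm2:
  assumes "spd (P::real^'n^'n)"
  shows "(r \<bullet> w)\<^sup>2 \<le> mnorm2 (matrix_inv P) r * mnorm2 P w"
proof -
  have "(matrix_inv P *v r) \<bullet> (P *v w) = r \<bullet> w"
    using symmetric_inner_commute[OF spd_symmetric[OF spd_matrix_inv[OF assms]]]
      matrix_inv_cancel(2)[OF spd_invertible[OF assms]] by (metis inner_commute)
  then show ?thesis
    using psd_cauchy_schwarz[OF spd_imp_psd[OF spd_matrix_inv[OF assms]], of r "P *v w"]
    by (simp add: mnorm2_matrix_inv(2)[OF assms])
qed

lemma weighted_young:
  assumes "spd (P::real^'n^'n)" and "0 \<le> a" and "0 \<le> D"
    and "mnorm2 (matrix_inv P) r \<le> a * D"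
  shows "\<bar>2 * al * (r \<bullet> w)\<bar> \<le> D + al\<^sup>2 * a * mnorm2 P w"
proof -
  define m where "m = mnorm2 P w"
  have "0 \<le> m" unfolding m_def using assms(1) by (rule spd_mnorm2_nonneg)
  have "(2 * al * (r \<bullet> w))\<^sup>2 = 4 * al\<^sup>2 * (r \<bullet> w)\<^sup>2"
    by (simp add: power_mult_distrib)
  also have "\<dots> \<le> 4 * al\<^sup>2 * (a * D * m)"
    using inner_square_le_dual_mnorm2[OF assms(1), of r w] mult_right_mono[OF assms(4) \<open>0 \<le> m\<close>]
    unfolding m_def by (intro mult_left_mono) auto
  also have "\<dots> \<le> (D + al\<^sup>2 * a * m)\<^sup>2"
    using sum_squares_ge_zero[of "D - al\<^sup>2 * a * m" 0]
    by (simp add: power2_eq_square algebra_simps)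
  finally show ?thesis
    using assms(2,3) \<open>0 \<le> m\<close> unfolding m_def by (simp add: abs_le_square_iff[symmetric])
qed

section \<open>Convex functions and their gradients\<close>

lemma convex_on_gradient_inequality:
  fixes g :: "'a::real_normed_vector \<Rightarrow> real"
  assumes cvx: "convex_on UNIV g" and der: "(g has_derivative g') (at x)"
  shows "g x + g' (y - x) \<le> g y"
proof -
  define \<phi> where "\<phi> t = g (x + t *\<^sub>R (y - x))" for t :: real
  have "convex_on UNIV \<phi>"
  proof (rule convex_onI)
    fix t s r :: real assume "0 < t" "t < 1"
    have "x + ((1 - t) *\<^sub>R s + t *\<^sub>R r) *\<^sub>R (y - x)
        = (1 - t) *\<^sub>R (x + s *\<^sub>R (y - x)) + t *\<^sub>R (x + r *\<^sub>R (y - x))"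
      by (simp add: algebra_simps)
    then show "\<phi> ((1 - t) *\<^sub>R s + t *\<^sub>R r) \<le> (1 - t) * \<phi> s + t * \<phi> r"
      unfolding \<phi>_def using convex_onD[OF cvx, of t] \<open>0 < t\<close> \<open>t < 1\<close> by simp
  qed simp
  moreover have "(\<phi> has_real_derivative g' (y - x)) (at 0)"
  proof -
    have "((\<lambda>t. x + t *\<^sub>R (y - x)) has_derivative (\<lambda>t. t *\<^sub>R (y - x))) (at 0)"
      by (auto intro!: derivative_eq_intros)
    then have "(\<phi> has_derivative (\<lambda>t. g' (t *\<^sub>R (y - x)))) (at 0)"
      unfolding \<phi>_def using der has_derivative_compose[of "\<lambda>t. x + t *\<^sub>R (y - x)" _ 0 UNIV g g']
      by simp
    moreover have "(\<lambda>t. g' (t *\<^sub>R (y - x))) = (\<lambda>t. g' (y - x) * t)"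
      using linear_scale[OF has_derivative_linear[OF der]] by (auto simp: mult.commute)
    ultimately show ?thesis by (simp add: has_field_derivative_def)
  qed
  ultimately have "g' (y - x) * (1 - 0) \<le> \<phi> 1 - \<phi> 0"
    by (intro convex_on_imp_above_tangent[where A = UNIV]) auto
  then show ?thesis unfolding \<phi>_def by simp
qed

lemma convex_on_gradient_monotone:
  fixes g :: "'a::real_inner \<Rightarrow> real"
  assumes "convex_on UNIV g" and "\<And>x. (g has_derivative (\<lambda>d. gg x \<bullet> d)) (at x)"
  shows "0 \<le> (gg x - gg y) \<bullet> (x - y)"
  using convex_on_gradient_inequality[OF assms, of x y]
    convex_on_gradient_inequality[OF assms, of y x]
  by (simp add: inner_diff_left inner_diff_right)

lemma S11_bregman_lower_bound:
  assumes "spd T" and cvx: "convex_on UNIV f"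
    and der: "\<And>x. (f has_derivative (\<lambda>d. gf x \<bullet> d)) (at x)"
    and S11: "S11 f gf T mu L" and "L \<le> 1"
  shows "1/2 * mnorm2 (matrix_inv T) (gf z - gf x) \<le> bregman f gf z x"
proof -
  define g where "g = gf z - gf x"
  \<comment> \<open>y minimises the quadratic upper bound of f at z minus the tangent of f at x\<close>
  define y where "y = z - matrix_inv T *v g"
  have "mnorm2 T (z - y) = mnorm2 (matrix_inv T) g"
    unfolding y_def by (simp add: mnorm2_matrix_inv(1)[OF \<open>spd T\<close>])
  moreover have "0 \<le> mnorm2 (matrix_inv T) g"
    using spd_mnorm2_nonneg[OF spd_matrix_inv[OF \<open>spd T\<close>]] .
  ultimately have upper: "bregman f gf y z \<le> 1/2 * mnorm2 (matrix_inv T) g"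
    using S11 \<open>L \<le> 1\<close> unfolding S11_def
    by (metis (no_types) mult_right_mono divide_right_mono dual_order.trans zero_le_numeral
        times_divide_eq_left mult_1)
  have lower: "f x + gf x \<bullet> (y - x) \<le> f y"
    by (rule convex_on_gradient_inequality[OF cvx der])
  have "g \<bullet> (y - z) = - mnorm2 (matrix_inv T) g"
    unfolding y_def mnorm2_def by (simp add: inner_commute)
  then show ?thesis
    using upper lower unfolding bregman_def g_def
    by (simp add: inner_diff_left inner_diff_right algebra_simps)
qed

lemma S11_gradient_cocoercive:
  assumes "spd T" and "convex_on UNIV f"
    and "\<And>x. (f has_derivative (\<lambda>d. gf x \<bullet> d)) (at x)"
    and "S11 f gf T mu L" and "L \<le> 1"
  shows "mnorm2 (matrix_inv T) (gf x - gf y) \<le> (gf x - gf y) \<bullet> (x - y)"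
  using S11_bregman_lower_bound[OF assms, of x y] S11_bregman_lower_bound[OF assms, of y x]
    mnorm2_minus_commute[of "matrix_inv T" "gf x" "gf y"]
  unfolding bregman_def by (simp add: inner_diff_left inner_diff_right)

lemma has_derivative_mnorm2:
  assumes "transpose M = M"
  shows "((\<lambda>w. mnorm2 (M::real^'n^'n) (w - c))
    has_derivative (\<lambda>d. 2 * ((M *v (w - c)) \<bullet> d))) (at w)"
proof -
  have "((\<lambda>w. (M *v (w - c)) \<bullet> (w - c)) has_derivative
      (\<lambda>d. (M *v (w - c)) \<bullet> d + (M *v d) \<bullet> (w - c))) (at w)"
    by (auto intro!: derivative_eq_intros
        bounded_linear.has_derivative[OF matrix_vector_mul_bounded_linear]
        simp: matrix_vector_mult_diff_distrib)
  moreover have "(\<lambda>d. (M *v (w - c)) \<bullet> d + (M *v d) \<bullet> (w - c)) = (\<lambda>d. 2 * ((M *v (w - c)) \<bullet> d))"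
    using symmetric_inner_commute[OF assms] by fastforce
  ultimately show ?thesis
    unfolding mnorm2_def by simp
qed

lemma has_derivative_plus_half_quadratic:
  assumes "transpose M = M" and "(g has_derivative (\<lambda>d. gg x \<bullet> d)) (at x)"
  shows "((\<lambda>v. g v + 1/2 * (((M::real^'n^'n) *v v) \<bullet> v))
    has_derivative (\<lambda>d. (gg x + M *v x) \<bullet> d)) (at x)"
proof -
  have "((\<lambda>v. 1/2 * mnorm2 M (v - 0)) has_derivative (\<lambda>d. 1/2 * (2 * ((M *v (x - 0)) \<bullet> d)))) (at x)"
    by (rule has_derivative_mult_right[OF has_derivative_mnorm2[OF assms(1)]])
  from has_derivative_add[OF assms(2) this] show ?thesis
    unfolding mnorm2_def by (simp add: inner_add_left)
qed

lemma strongly_convex_wrt_gradient_monotone: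
  assumes sc: "strongly_convex_wrt V mu g" and "transpose V = V"
    and der: "\<And>x. (g has_derivative (\<lambda>d. gg x \<bullet> d)) (at x)"
  shows "mu * mnorm2 V (x - y) \<le> (gg x - gg y) \<bullet> (x - y)"
proof -
  have "((\<lambda>v. g v - mu / 2 * mnorm2 V v)
      has_derivative (\<lambda>d. (gg x - mu *\<^sub>R (V *v x)) \<bullet> d)) (at x)" for x
  proof -
    have "((\<lambda>v. mu / 2 * mnorm2 V (v - 0))
        has_derivative (\<lambda>d. mu / 2 * (2 * ((V *v (x - 0)) \<bullet> d)))) (at x)"
      by (rule has_derivative_mult_right[OF has_derivative_mnorm2[OF assms(2)]])
    moreover have "(\<lambda>d. (gg x - mu *\<^sub>R (V *v x)) \<bullet> d)
        = (\<lambda>d. gg x \<bullet> d - mu / 2 * (2 * ((V *v (x - 0)) \<bullet> d)))"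
      by (simp add: inner_diff_left)
    ultimately show ?thesis
      using has_derivative_diff[OF der] by (simp only: diff_zero)
  qed
  then have "0 \<le> ((gg x - mu *\<^sub>R (V *v x)) - (gg y - mu *\<^sub>R (V *v y))) \<bullet> (x - y)"
    by (rule convex_on_gradient_monotone[where gg = "\<lambda>x. gg x - mu *\<^sub>R (V *v x)",
          OF sc[unfolded strongly_convex_wrt_def]])
  then show ?thesis
    unfolding mnorm2_def
    by (simp add: matrix_vector_mult_diff_distrib inner_diff_left algebra_simps)
qed

lemma strongly_monotone_le_lipschitz:
  fixes g :: "real^'n \<Rightarrow> real^'n"
  assumes "spd Q" and "0 \<le> L"
    and mono: "\<And>x y. mu * mnorm2 Q (x - y) \<le> (g x - g y) \<bullet> (x - y)"
    and lip: "\<And>x y. mnorm2 (matrix_inv Q) (g x - g y) \<le> L\<^sup>2 * mnorm2 Q (x - y)"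
  shows "mu \<le> L"
proof (cases "mu \<le> 0")
  case False
  obtain x :: "real^'n" where "x \<noteq> 0"
    using vector_choose_size[of 1] by force
  define m where "m = mnorm2 Q (x - 0)"
  have "0 < m" unfolding m_def using spd_mnorm2_pos[OF \<open>spd Q\<close>] \<open>x \<noteq> 0\<close> by simp
  have "(mu * m)\<^sup>2 \<le> ((g x - g 0) \<bullet> (x - 0))\<^sup>2"
    using mono[of x 0] False \<open>0 < m\<close> unfolding m_def by (intro power_mono) auto
  also have "\<dots> \<le> mnorm2 (matrix_inv Q) (g x - g 0) * m"
    unfolding m_def by (rule inner_square_le_dual_mnorm2[OF \<open>spd Q\<close>])
  also have "\<dots> \<le> L\<^sup>2 * m * m"
    using lip[of x 0] \<open>0 < m\<close> unfolding m_def by (intro mult_right_mono) auto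
  finally have "mu\<^sup>2 \<le> L\<^sup>2"
    using \<open>0 < m\<close> by (simp add: power_mult_distrib power2_eq_square)
  then show ?thesis
    using \<open>0 \<le> L\<close> by (rule power2_le_imp_le)
qed (use \<open>0 \<le> L\<close> in simp)

section \<open>Generalized eigenvalues and the Rayleigh quotient\<close>

lemma generalized_eigenvectors_orthogonal:
  assumes "spd P" and "transpose K = K"
    and "K *v v = c *\<^sub>R (P *v v)" and "K *v w = d *\<^sub>R (P *v w)" and "c \<noteq> d"
  shows "(P *v v) \<bullet> w = 0"
proof -
  have "c * ((P *v v) \<bullet> w) = d * ((P *v w) \<bullet> v)"
    using symmetric_inner_commute[OF assms(2), of v w] assms(3,4) by simp
  also have "(P *v w) \<bullet> v = (P *v v) \<bullet> w"
    using symmetric_inner_commute[OF spd_symmetric[OF assms(1)]] by simp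
  finally have "(c - d) * ((P *v v) \<bullet> w) = 0"
    by (simp add: left_diff_distrib)
  then show ?thesis using assms(5) by simp
qed

lemma spd_orthogonal_imp_independent:
  assumes "spd P" and "finite S" and "0 \<notin> S"
    and orth: "\<And>v w. v \<in> S \<Longrightarrow> w \<in> S \<Longrightarrow> v \<noteq> w \<Longrightarrow> (P *v v) \<bullet> w = 0"
  shows "independent S"
proof
  assume "dependent S"
  then obtain a w where "(\<Sum>v\<in>S. a v *\<^sub>R v) = 0" "w \<in> S" "a w \<noteq> 0"
    using dependent_finite[OF \<open>finite S\<close>] by auto
  then have "0 = (P *v w) \<bullet> (\<Sum>v\<in>S. a v *\<^sub>R v)"
    by simp
  also have "\<dots> = (\<Sum>v\<in>S. if v = w then a w * mnorm2 P w else 0)"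
    unfolding inner_sum_right
  proof (rule sum.cong)
    show "(P *v w) \<bullet> (a v *\<^sub>R v) = (if v = w then a w * mnorm2 P w else 0)" if "v \<in> S" for v
      using orth[OF \<open>w \<in> S\<close> that] by (auto simp: mnorm2_def)
  qed simp
  also have "\<dots> = a w * mnorm2 P w"
    using \<open>finite S\<close> \<open>w \<in> S\<close> by simp
  finally show False
    using \<open>a w \<noteq> 0\<close> spd_mnorm2_pos[OF \<open>spd P\<close>, of w] \<open>w \<in> S\<close> \<open>0 \<notin> S\<close> by auto
qed

lemma finite_eigenvalues_matrix_inv_mult:
  fixes P K :: "real^'n^'n"
  assumes "spd P" and "transpose K = K"
  shows "finite {c. \<exists>v. v \<noteq> 0 \<and> (matrix_inv P ** K) *v v = c *s v}"
proof -
  let ?E = "{c. \<exists>v. v \<noteq> 0 \<and> (matrix_inv P ** K) *v v = c *s v}"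
  have "card F \<le> CARD('n)" if "F \<subseteq> ?E" "finite F" for F
  proof -
    have "\<forall>c\<in>F. \<exists>v. v \<noteq> 0 \<and> (matrix_inv P ** K) *v v = c *s v"
      using that(1) by blast
    then obtain ev where ev: "\<And>c. c \<in> F \<Longrightarrow> ev c \<noteq> 0 \<and> (matrix_inv P ** K) *v ev c = c *s ev c"
      using bchoice by metis
    have evK: "K *v ev c = c *\<^sub>R (P *v ev c)" if "c \<in> F" for c
      using arg_cong[OF conjunct2[OF ev[OF that]], of "\<lambda>x. P *v x"]
      by (simp add: matrix_vector_mul_assoc[symmetric]
          matrix_inv_cancel(1)[OF spd_invertible[OF assms(1)]]
          scalar_mult_eq_scaleR matrix_vector_mult_scaleR)
    have inj: "inj_on ev F"
    proof (rule inj_onI)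
      fix a b assume "a \<in> F" "b \<in> F" "ev a = ev b"
      then have "(a - b) *\<^sub>R ev a = 0"
        using ev by (metis scalar_mult_eq_scaleR scaleR_left_diff_distrib right_minus_eq)
      then show "a = b" using ev[OF \<open>a \<in> F\<close>] by simp
    qed
    have "independent (ev ` F)"
    proof (rule spd_orthogonal_imp_independent[OF assms(1)])
      fix v w assume "v \<in> ev ` F" "w \<in> ev ` F" "v \<noteq> w"
      then obtain a b where "a \<in> F" "b \<in> F" "v = ev a" "w = ev b" "a \<noteq> b"
        by blast
      then show "(P *v v) \<bullet> w = 0"
        using generalized_eigenvectors_orthogonal[OF assms evK evK] by simp
    qed (use ev \<open>finite F\<close> in auto)
    then show ?thesis
      using independent_bound card_image[OF inj] by (metis DIM_cart DIM_real mult.right_neutral)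
  qed
  then show ?thesis
    using finite_if_finite_subsets_card_bdd by blast
qed

lemma mnorm2_ratio_attains_max:
  fixes Q :: "real^'k^'k" and C :: "real^'m^'k" and V :: "real^'m^'m"
  assumes "spd V"
  obtains x0 c where "x0 \<noteq> 0" and "mnorm2 Q (C *v x0) = c * mnorm2 V x0"
    and "\<And>x. mnorm2 Q (C *v x) \<le> c * mnorm2 V x"
proof -
  define R where "R x = mnorm2 Q (C *v x) / mnorm2 V x" for x
  have cont: "continuous_on UNIV (\<lambda>x. mnorm2 M (A *v x))"
    for M :: "real^'j^'j" and A :: "real^'m^'j"
    unfolding mnorm2_def
    by (intro continuous_intros bounded_linear.continuous_on[OF matrix_vector_mul_bounded_linear])
  have "mnorm2 V x \<noteq> 0" if "x \<in> sphere 0 1" for x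
    using spd_mnorm2_pos[OF assms, of x] that
    by (metis less_irrefl mem_sphere_0 norm_zero zero_neq_one)
  then have cont_R: "continuous_on (sphere 0 1) R"
    unfolding R_def
    using continuous_on_subset[OF cont[of Q C]] continuous_on_subset[OF cont[of V "mat 1"]]
    by (intro continuous_on_divide) auto
  then obtain x0 where x0: "x0 \<in> sphere 0 1" "\<And>y. y \<in> sphere 0 1 \<Longrightarrow> R y \<le> R x0"
    using continuous_attains_sup[OF compact_sphere _ cont_R] by auto
  have "x0 \<noteq> 0" using x0(1) by auto
  have "mnorm2 Q (C *v x) \<le> R x0 * mnorm2 V x" for x
  proof (cases "x = 0")
    case False
    have "R x = R ((1 / norm x) *\<^sub>R x)"
      unfolding R_def using False by (simp add: matrix_vector_mult_scaleR mnorm2_scaleR)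
    also have "\<dots> \<le> R x0"
      using False by (intro x0(2)) simp
    finally show ?thesis
      unfolding R_def using spd_mnorm2_pos[OF assms False] by (simp add: divide_le_eq)
  qed (simp add: mnorm2_def)
  moreover have "mnorm2 Q (C *v x0) = R x0 * mnorm2 V x0"
    unfolding R_def using spd_mnorm2_pos[OF assms \<open>x0 \<noteq> 0\<close>] by simp
  ultimately show ?thesis using that \<open>x0 \<noteq> 0\<close> by blast
qed

lemma mnorm2_ratio_max_is_eigenvalue:
  fixes B :: "real^'m^'n" and IQ :: "real^'n^'n" and IV :: "real^'m^'m"
  assumes "spd IQ" and "spd IV" and "x0 \<noteq> 0"
    and attained: "mnorm2 (matrix_inv IQ) (B *v x0) = c * mnorm2 IV x0"
    and bound: "\<And>x. mnorm2 (matrix_inv IQ) (B *v x) \<le> c * mnorm2 IV x"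
  shows "\<exists>v. v \<noteq> 0 \<and> (matrix_inv IQ ** B ** matrix_inv IV ** transpose B) *v v = c *s v"
proof -
  \<comment> \<open>Maximality of c makes c IV - B^T IQ^-1 B positive semidefinite with x0 in its kernel,
    so IQ^-1 B x0 is an eigenvector; if it vanishes, then B = 0 and c = 0.\<close>
  let ?Q = "matrix_inv IQ" and ?A = "matrix_inv IQ ** B ** matrix_inv IV ** transpose B"
  have spd_Q: "spd ?Q" using assms(1) by (rule spd_matrix_inv)
  define \<Phi> where "\<Phi> = c *\<^sub>R IV - transpose B ** ?Q ** B"
  have \<Phi>_apply: "\<Phi> *v x = c *\<^sub>R (IV *v x) - transpose B *v (?Q *v (B *v x))" for x
    unfolding \<Phi>_def
    by (simp add: matrix_vector_mult_diff_rdistrib scaleR_matrix_vector_assoc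
        matrix_vector_mul_assoc
        matrix_mul_assoc)
  have "mnorm2 \<Phi> x = c * mnorm2 IV x - mnorm2 ?Q (B *v x)" for x
    unfolding mnorm2_def \<Phi>_apply
    by (simp add: inner_diff_left dot_lmul_matrix)
  moreover have "transpose \<Phi> = \<Phi>"
    unfolding \<Phi>_def transpose_diff transpose_scalar
    by (simp add: spd_symmetric[OF assms(2)] transpose_congruence_symmetric spd_symmetric[OF spd_Q])
  ultimately have "psd \<Phi>" and "mnorm2 \<Phi> x0 = 0"
    unfolding psd_def using bound attained by auto
  then have eigen: "transpose B *v (?Q *v (B *v x0)) = c *\<^sub>R (IV *v x0)"
    using psd_mnorm2_eq_0 \<Phi>_apply by (metis eq_iff_diff_eq_0)
  define v where "v = ?Q *v (B *v x0)"
  have "?A *v v = ?Q *v (B *v (matrix_inv IV *v (transpose B *v v)))"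
    by (simp only: matrix_vector_mul_assoc matrix_mul_assoc)
  also have "\<dots> = c *s v"
    unfolding v_def eigen
    by (simp add: matrix_vector_mult_scaleR matrix_inv_cancel(2)[OF spd_invertible[OF assms(2)]]
        scalar_mult_eq_scaleR)
  finally have Av: "?A *v v = c *s v" .
  show ?thesis
  proof (cases "v = 0")
    case True
    then have "B *v x0 = 0"
      unfolding v_def
      by (metis spd_invertible[OF assms(1)] matrix_inv_cancel(1) matrix_vector_mult_0_right)
    then have "c = 0"
      using attained spd_mnorm2_pos[OF assms(2) \<open>x0 \<noteq> 0\<close>] by (simp add: mnorm2_def)
    then have "B *v x = 0" for x
      using bound[of x] spd_mnorm2_pos[OF spd_Q, of "B *v x"] by force
    then have "?A *v w = c *s w" for w
      using \<open>c = 0\<close> by (simp add: matrix_vector_mul_assoc[symmetric])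
    moreover obtain w :: "real^'n" where "w \<noteq> 0"
      using vector_choose_size[of 1] by force
    ultimately show ?thesis by blast
  qed (use Av in blast)
qed

lemma mnorm2_matrix_inv_le_lambda_max:
  fixes B :: "real^'m^'n" and IQ :: "real^'n^'n" and IV :: "real^'m^'m"
  assumes "spd IQ" and "spd IV"
  shows "0 \<le> lambda_max (matrix_inv IQ ** B ** matrix_inv IV ** transpose B)"
    and "mnorm2 (matrix_inv IQ) (B *v y)
      \<le> lambda_max (matrix_inv IQ ** B ** matrix_inv IV ** transpose B) * mnorm2 IV y"
proof -
  let ?A = "matrix_inv IQ ** B ** matrix_inv IV ** transpose B"
  obtain x0 c where "x0 \<noteq> 0" and attained: "mnorm2 (matrix_inv IQ) (B *v x0) = c * mnorm2 IV x0"
    and bound: "\<And>x. mnorm2 (matrix_inv IQ) (B *v x) \<le> c * mnorm2 IV x"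
    using mnorm2_ratio_attains_max[OF assms(2)] by metis
  have "0 \<le> c * mnorm2 IV x0"
    unfolding attained[symmetric] by (rule spd_mnorm2_nonneg[OF spd_matrix_inv[OF assms(1)]])
  then have "0 \<le> c"
    using spd_mnorm2_pos[OF assms(2) \<open>x0 \<noteq> 0\<close>] by (simp add: zero_le_mult_iff)
  have "transpose (B ** matrix_inv IV ** transpose B) = B ** matrix_inv IV ** transpose B"
    using transpose_congruence_symmetric[OF spd_symmetric[OF spd_matrix_inv[OF assms(2)]],
        of "transpose B"]
    by simp
  from finite_eigenvalues_matrix_inv_mult[OF assms(1) this]
  have "finite {c. \<exists>v. v \<noteq> 0 \<and> ?A *v v = c *s v}"
    by (simp add: matrix_mul_assoc)
  then have "c \<le> lambda_max ?A"
    unfolding lambda_max_def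
    using mnorm2_ratio_max_is_eigenvalue[OF assms \<open>x0 \<noteq> 0\<close> attained bound] by (simp add: Max_ge)
  then show "0 \<le> lambda_max ?A" and "mnorm2 (matrix_inv IQ) (B *v y) \<le> lambda_max ?A * mnorm2 IV y"
    using \<open>0 \<le> c\<close> bound[of y] mult_right_mono[OF _ spd_mnorm2_nonneg[OF assms(2)]]
    by (auto intro: order_trans)
qed

section \<open>One step of the iteration\<close>

lemma proximal_step_optimality:
  fixes V :: "real^'m^'m"
  assumes "spd V" and "0 < al"
    and der: "(g has_derivative (\<lambda>d. gg u1 \<bullet> d)) (at u1)"
    and min: "\<And>v. g u1 + 1 / (2 * al) * mnorm2 V (u1 - u0 + al *s (matrix_inv V *v c))
      \<le> g v + 1 / (2 * al) * mnorm2 V (v - u0 + al *s (matrix_inv V *v c))"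
  shows "V *v (u1 - u0) = - al *s (gg u1 + c)"
proof -
  define d where "d = al *s (matrix_inv V *v c)"
  define w where "w = gg u1 + (1 / al) *\<^sub>R (V *v (u1 - u0 + d))"
  have "((\<lambda>v. mnorm2 V (v - (u0 - d)))
      has_derivative (\<lambda>h. 2 * ((V *v (u1 - (u0 - d))) \<bullet> h))) (at u1)"
    by (rule has_derivative_mnorm2[OF spd_symmetric[OF \<open>spd V\<close>]])
  from has_derivative_add[OF der has_derivative_mult_right[OF this, of "1 / (2 * al)"]]
  have "((\<lambda>v. g v + 1 / (2 * al) * mnorm2 V (v - u0 + d)) has_derivative (\<lambda>h. w \<bullet> h)) (at u1)"
    unfolding w_def by (simp add: inner_add_left algebra_simps)
  then have "(\<lambda>h. w \<bullet> h) = (\<lambda>h. 0)"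
    using min unfolding d_def[symmetric] by (intro differential_zero_maxmin[of u1 UNIV]) auto
  then have "w = 0"
    by (metis inner_eq_zero_iff)
  have "V *v d = al *\<^sub>R c"
    unfolding d_def
    by (simp add: scalar_mult_eq_scaleR matrix_vector_mult_scaleR
        matrix_inv_cancel(1)[OF spd_invertible[OF \<open>spd V\<close>]])
  then have "V *v (u1 - u0) + al *\<^sub>R (gg u1 + c) = al *\<^sub>R w"
    unfolding w_def using \<open>0 < al\<close> by (simp add: matrix_vector_right_distrib scaleR_add_right)
  then show ?thesis
    using \<open>w = 0\<close> by (simp add: scalar_mult_eq_scaleR eq_neg_iff_add_eq_0)
qed

lemma semi_implicit_step_contraction:
  fixes V :: "real^'m^'m" and Q :: "real^'n^'n"
  assumes "spd V" and "spd Q" and "0 < al" and "0 \<le> a" and "0 \<le> b"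
    and mu_pos: "0 < min mu_u (mu_p - al * (a + b))"
    and u_step: "V *v (u1 - u0) = - al *s g_u"
    and p_step: "Q *v (p1 - p0) = - al *s (g_p + r1 + r2)"
    and mono: "mu_u * mnorm2 V (u1 - us) + mu_p * mnorm2 Q (p1 - ps)
      \<le> 2 * (g_u \<bullet> (u1 - us) + g_p \<bullet> (p1 - ps))"
    and r1: "mnorm2 (matrix_inv Q) r1 \<le> a * mnorm2 Q (p1 - p0)"
    and r2: "mnorm2 (matrix_inv Q) r2 \<le> b * mnorm2 V (u1 - u0)"
  shows "1/2 * mnorm2 V (u1 - us) + 1/2 * mnorm2 Q (p1 - ps)
    \<le> 1 / (1 + al * min mu_u (mu_p - al * (a + b)))
        * (1/2 * mnorm2 V (u0 - us) + 1/2 * mnorm2 Q (p0 - ps))"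
proof -
  define mu where "mu = min mu_u (mu_p - al * (a + b))"
  define du dp Du Dp where "du = u1 - us" and "dp = p1 - ps" and "Du = u1 - u0" and "Dp = p1 - p0"
  have "u0 - us = du - Du" and "p0 - ps = dp - Dp"
    unfolding du_def dp_def Du_def Dp_def by simp_all
  then have energy_u: "mnorm2 V (u0 - us) = mnorm2 V du + 2 * al * (g_u \<bullet> du) + mnorm2 V Du"
    and energy_p: "mnorm2 Q (p0 - ps) = mnorm2 Q dp + 2 * al * ((g_p + r1 + r2) \<bullet> dp) + mnorm2 Q Dp"
    using u_step p_step unfolding Du_def[symmetric] Dp_def[symmetric]
    by (simp_all add: mnorm2_diff spd_symmetric \<open>spd V\<close> \<open>spd Q\<close> scalar_mult_eq_scaleR)
  have "- (mnorm2 Q Dp + al\<^sup>2 * a * mnorm2 Q dp) \<le> 2 * al * (r1 \<bullet> dp)"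
    using weighted_young[OF \<open>spd Q\<close> \<open>0 \<le> a\<close> spd_mnorm2_nonneg[OF \<open>spd Q\<close>] r1, of al dp]
    unfolding Dp_def by (simp add: abs_le_iff)
  moreover have "- (mnorm2 V Du + al\<^sup>2 * b * mnorm2 Q dp) \<le> 2 * al * (r2 \<bullet> dp)"
    using weighted_young[OF \<open>spd Q\<close> \<open>0 \<le> b\<close> spd_mnorm2_nonneg[OF \<open>spd V\<close>] r2, of al dp]
    unfolding Du_def by (simp add: abs_le_iff)
  moreover have "al * (mu_u * mnorm2 V du + mu_p * mnorm2 Q dp) \<le> 2 * al * (g_u \<bullet> du + g_p \<bullet> dp)"
    using mult_left_mono[OF mono less_imp_le[OF \<open>0 < al\<close>]] unfolding du_def dp_def
    by (simp add: algebra_simps)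
  moreover have "al * mu * mnorm2 V du \<le> al * mu_u * mnorm2 V du"
    and "al * mu * mnorm2 Q dp \<le> al * (mu_p - al * (a + b)) * mnorm2 Q dp"
    unfolding mu_def using \<open>0 < al\<close> spd_mnorm2_nonneg[OF \<open>spd V\<close>] spd_mnorm2_nonneg[OF \<open>spd Q\<close>]
    by (intro mult_right_mono mult_left_mono; simp)+
  moreover have "al * (mu_p - al * (a + b)) * mnorm2 Q dp
      = al * mu_p * mnorm2 Q dp - al\<^sup>2 * a * mnorm2 Q dp - al\<^sup>2 * b * mnorm2 Q dp"
    by (simp add: power2_eq_square algebra_simps)
  ultimately have "(1 + al * mu) * (mnorm2 V du + mnorm2 Q dp)
      \<le> mnorm2 V (u0 - us) + mnorm2 Q (p0 - ps)"
    unfolding energy_u energy_p by (simp add: inner_add_left algebra_simps)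
  moreover have "0 < 1 + al * mu"
    using \<open>0 < al\<close> mu_pos unfolding mu_def by (simp add: add_pos_pos)
  ultimately show ?thesis
    unfolding mu_def[symmetric] du_def dp_def by (simp add: field_simps)
qed

definition grad_fB :: "real^'m^'n \<Rightarrow> real^'n^'n \<Rightarrow> (real^'m \<Rightarrow> real^'m) \<Rightarrow> real^'m \<Rightarrow> real^'m" where
  "grad_fB B TP gf u = gf u + (transpose B ** matrix_inv TP ** B) *v u"

definition grad_hB :: "real^'m^'n \<Rightarrow> real^'m^'m \<Rightarrow> (real^'n \<Rightarrow> real^'n) \<Rightarrow> real^'n \<Rightarrow> real^'n" where
  "grad_hB B TU gh p = gh p + (B ** matrix_inv TU ** transpose B) *v p"

definition e_U :: "real^'m^'m \<Rightarrow> (real^'m \<Rightarrow> real^'m) \<Rightarrow> real^'m \<Rightarrow> real^'m" where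
  "e_U TU gf u = u - matrix_inv TU *v gf u"

definition primal_residual ::
    "real^'m^'n \<Rightarrow> real^'n^'n \<Rightarrow> (real^'m \<Rightarrow> real^'m) \<Rightarrow> (real^'n \<Rightarrow> real^'n) \<Rightarrow> real^'m \<Rightarrow> real^'n \<Rightarrow> real^'m"
  where "primal_residual B TP gf gh u p
    = grad_fB B TP gf u + transpose B *v (p - matrix_inv TP *v gh p)"

definition dual_residual ::
    "real^'m^'n \<Rightarrow> real^'m^'m \<Rightarrow> (real^'m \<Rightarrow> real^'m) \<Rightarrow> (real^'n \<Rightarrow> real^'n) \<Rightarrow> real^'m \<Rightarrow> real^'n \<Rightarrow> real^'n"
  where "dual_residual B TU gf gh u p = grad_hB B TU gh p - B *v e_U TU gf u"

lemma has_derivative_fB: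
  assumes "spd TP" and "\<And>x. (f has_derivative (\<lambda>d. gf x \<bullet> d)) (at x)"
  shows "((\<lambda>v. f v + 1/2 * (((transpose B ** matrix_inv TP ** B) *v v) \<bullet> v))
    has_derivative (\<lambda>d. grad_fB B TP gf x \<bullet> d)) (at x)"
  unfolding grad_fB_def
  by (rule has_derivative_plus_half_quadratic[OF transpose_congruence_symmetric assms(2)])
    (rule spd_symmetric[OF spd_matrix_inv[OF assms(1)]])

lemma has_derivative_hB:
  assumes "spd TU" and "\<And>x. (h has_derivative (\<lambda>d. gh x \<bullet> d)) (at x)"
  shows "((\<lambda>q. h q + 1/2 * (((B ** matrix_inv TU ** transpose B) *v q) \<bullet> q))
    has_derivative (\<lambda>d. grad_hB B TU gh x \<bullet> d)) (at x)"
proof -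
  have "transpose (B ** matrix_inv TU ** transpose B) = B ** matrix_inv TU ** transpose B"
    using transpose_congruence_symmetric[OF spd_symmetric[OF spd_matrix_inv[OF assms(1)]],
        of "transpose B"]
    by simp
  then show ?thesis
    unfolding grad_hB_def by (rule has_derivative_plus_half_quadratic[OF _ assms(2)])
qed

lemma saddle_point_residuals:
  assumes "gf ustar + transpose B *v pstar = 0" and "B *v ustar = gh pstar"
  shows "primal_residual B TP gf gh ustar pstar = 0" and "dual_residual B TU gf gh ustar pstar = 0"
proof -
  show "primal_residual B TP gf gh ustar pstar = 0"
    using assms(1)
    unfolding primal_residual_def grad_fB_def congruence_matrix_vector_mult assms(2)
    by (simp add: matrix_vector_mult_diff_distrib algebra_simps)
  have "dual_residual B TU gf gh ustar pstar
      = B *v (matrix_inv TU *v (gf ustar + transpose B *v pstar))"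
    unfolding dual_residual_def grad_hB_def e_U_def assms(2)[symmetric]
      congruence_matrix_vector_mult[of "transpose B", unfolded transpose_transpose]
    by (simp add: matrix_vector_mult_diff_distrib matrix_vector_right_distrib)
  then show "dual_residual B TU gf gh ustar pstar = 0"
    using assms(1) by simp
qed

lemma dual_residual_step:
  "gh p - B *v (u - matrix_inv TU *v (gf u + transpose B *v p)) = dual_residual B TU gf gh u p"
  unfolding dual_residual_def grad_hB_def e_U_def
    congruence_matrix_vector_mult[of "transpose B", unfolded transpose_transpose]
  by (simp add: matrix_vector_mult_diff_distrib matrix_vector_right_distrib)

lemma residuals_monotone:
  fixes B :: "real^'m^'n" and TU IV :: "real^'m^'m" and TP IQ :: "real^'n^'n"
  assumes "spd TU" and "spd TP"
    and gf_cocoercive: "\<And>x y. mnorm2 (matrix_inv TU) (gf x - gf y) \<le> (gf x - gf y) \<bullet> (x - y)"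
    and gh_cocoercive: "\<And>x y. mnorm2 (matrix_inv TP) (gh x - gh y) \<le> (gh x - gh y) \<bullet> (x - y)"
    and grad_fB_mono:
      "\<And>x y. mu_f * mnorm2 IV (x - y) \<le> (grad_fB B TP gf x - grad_fB B TP gf y) \<bullet> (x - y)"
    and grad_hB_mono:
      "\<And>x y. mu_h * mnorm2 IQ (x - y) \<le> (grad_hB B TU gh x - grad_hB B TU gh y) \<bullet> (x - y)"
  shows "mu_f * mnorm2 IV (u - u') + mu_h * mnorm2 IQ (p - p')
    \<le> 2 * ((primal_residual B TP gf gh u p - primal_residual B TP gf gh u' p') \<bullet> (u - u')
           + (dual_residual B TU gf gh u p - dual_residual B TU gf gh u' p') \<bullet> (p - p'))"
proof -
  let ?TUi = "matrix_inv TU" and ?TPi = "matrix_inv TP"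
  define du dp G H
    where "du = u - u'" and "dp = p - p'" and "G = gf u - gf u'" and "H = gh p - gh p'"
  define S_f where "S_f = (grad_fB B TP gf u - grad_fB B TP gf u') \<bullet> du"
  define S_h where "S_h = (grad_hB B TU gh p - grad_hB B TU gh p') \<bullet> dp"
  have S_f_eq: "S_f = G \<bullet> du + mnorm2 ?TPi (B *v du)"
    unfolding S_f_def grad_fB_def G_def du_def mnorm2_def congruence_matrix_vector_mult
    by (simp add: matrix_vector_mult_diff_distrib inner_diff_left inner_add_left dot_lmul_matrix
        algebra_simps)
  have S_h_eq: "S_h = H \<bullet> dp + mnorm2 ?TUi (transpose B *v dp)"
    unfolding S_h_def grad_hB_def H_def dp_def mnorm2_def
      congruence_matrix_vector_mult[of "transpose B", unfolded transpose_transpose]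
    by (simp add: matrix_vector_mult_diff_distrib inner_diff_left inner_add_left
        inner_matrix_vector_transpose[of B] algebra_simps)
  have primal_diff: "primal_residual B TP gf gh u p - primal_residual B TP gf gh u' p'
      = (grad_fB B TP gf u - grad_fB B TP gf u') + transpose B *v (dp - ?TPi *v H)"
    unfolding primal_residual_def dp_def H_def by (simp add: matrix_vector_mult_diff_distrib)
  have "(primal_residual B TP gf gh u p - primal_residual B TP gf gh u' p') \<bullet> (u - u')
      = S_f + (B *v du) \<bullet> dp - (?TPi *v H) \<bullet> (B *v du)"
    unfolding primal_diff S_f_def du_def[symmetric] inner_add_left
      inner_matrix_vector_transpose[of "transpose B"] transpose_transpose
    by (simp add: inner_diff_right inner_commute)
  moreover have "(dual_residual B TU gf gh u p - dual_residual B TU gf gh u' p') \<bullet> (p - p')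
      = S_h - (B *v du) \<bullet> dp + (?TUi *v G) \<bullet> (transpose B *v dp)"
    unfolding dual_residual_def e_U_def S_h_def du_def dp_def G_def
    by (simp add: matrix_vector_mult_diff_distrib inner_diff_left inner_diff_right
        inner_matrix_vector_transpose[of B] algebra_simps)
  moreover have "2 * ((?TPi *v H) \<bullet> (B *v du)) \<le> mnorm2 ?TPi H + mnorm2 ?TPi (B *v du)"
    using psd_young[OF spd_imp_psd[OF spd_matrix_inv[OF \<open>spd TP\<close>]]] by (simp add: abs_le_iff)
  moreover have "- 2 * ((?TUi *v G) \<bullet> (transpose B *v dp))
      \<le> mnorm2 ?TUi G + mnorm2 ?TUi (transpose B *v dp)"
    using psd_young[OF spd_imp_psd[OF spd_matrix_inv[OF \<open>spd TU\<close>]]] by (simp add: abs_le_iff)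
  moreover have "mu_f * mnorm2 IV du \<le> S_f" and "mu_h * mnorm2 IQ dp \<le> S_h"
    unfolding S_f_def S_h_def du_def dp_def by (fact grad_fB_mono grad_hB_mono)+
  moreover have "mnorm2 ?TUi G \<le> G \<bullet> du" and "mnorm2 ?TPi H \<le> H \<bullet> dp"
    unfolding G_def H_def du_def dp_def by (fact gf_cocoercive gh_cocoercive)+
  ultimately show ?thesis
    unfolding du_def[symmetric] dp_def[symmetric] S_f_eq S_h_eq by argo
qed

lemma primal_dual_step_contraction:
  fixes B :: "real^'m^'n" and TU IV :: "real^'m^'m" and TP IQ :: "real^'n^'n"
  assumes spd: "spd TU" "spd TP" "spd IV" "spd IQ"
    and f_grad: "\<And>x. (f has_derivative (\<lambda>d. gf x \<bullet> d)) (at x)"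
    and gf_cocoercive: "\<And>x y. mnorm2 (matrix_inv TU) (gf x - gf y) \<le> (gf x - gf y) \<bullet> (x - y)"
    and gh_cocoercive: "\<And>x y. mnorm2 (matrix_inv TP) (gh x - gh y) \<le> (gh x - gh y) \<bullet> (x - y)"
    and grad_fB_mono:
      "\<And>x y. mu_fB * mnorm2 IV (x - y) \<le> (grad_fB B TP gf x - grad_fB B TP gf y) \<bullet> (x - y)"
    and grad_hB_mono:
      "\<And>x y. mu_hB * mnorm2 IQ (x - y) \<le> (grad_hB B TU gh x - grad_hB B TU gh y) \<bullet> (x - y)"
    and grad_hB_lip: "\<And>x y. mnorm2 (matrix_inv IQ) (grad_hB B TU gh x - grad_hB B TU gh y)
      \<le> L_hB\<^sup>2 * mnorm2 IQ (x - y)"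
    and e_U_lip: "\<And>x y. mnorm2 IV (e_U TU gf x - e_U TU gf y) \<le> L_eU\<^sup>2 * mnorm2 IV (x - y)"
    and "0 \<le> lam" and B_bound: "\<And>y. mnorm2 (matrix_inv IQ) (B *v y) \<le> lam * mnorm2 IV y"
    and saddle: "gf ustar + transpose B *v pstar = 0" "B *v ustar = gh pstar"
    and "0 < al" and mu_pos: "0 < min mu_fB (mu_hB - al * (L_hB\<^sup>2 + L_eU\<^sup>2 * lam))"
    and p_step: "p1 = p0 - al *s (matrix_inv IQ *v
      (gh p0 - B *v (u0 - matrix_inv TU *v (gf u0 + transpose B *v p0))))"
    and u_step: "\<And>v. f u1 + 1/2 * (((transpose B ** matrix_inv TP ** B) *v u1) \<bullet> u1)
        + 1 / (2 * al) * mnorm2 IV (u1 - u0 + al *s (matrix_inv IV *v (transpose B *v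
            (p1 - matrix_inv TP *v gh p1))))
      \<le> f v + 1/2 * (((transpose B ** matrix_inv TP ** B) *v v) \<bullet> v)
        + 1 / (2 * al) * mnorm2 IV (v - u0 + al *s (matrix_inv IV *v (transpose B *v
            (p1 - matrix_inv TP *v gh p1))))"
  shows "1/2 * mnorm2 IV (u1 - ustar) + 1/2 * mnorm2 IQ (p1 - pstar)
    \<le> 1 / (1 + al * min mu_fB (mu_hB - al * (L_hB\<^sup>2 + L_eU\<^sup>2 * lam)))
        * (1/2 * mnorm2 IV (u0 - ustar) + 1/2 * mnorm2 IQ (p0 - pstar))"
proof -
  let ?P = "primal_residual B TP gf gh" and ?D = "dual_residual B TU gf gh"
  have residuals_vanish: "?P ustar pstar = 0" "?D ustar pstar = 0"
    using saddle by (rule saddle_point_residuals)+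
  show ?thesis
  proof (rule semi_implicit_step_contraction[OF spd(3,4) \<open>0 < al\<close> _ _ mu_pos])
    show "IV *v (u1 - u0) = - al *s (?P u1 p1 - ?P ustar pstar)"
      unfolding residuals_vanish diff_zero
      using proximal_step_optimality[where gg = "grad_fB B TP gf",
          OF spd(3) \<open>0 < al\<close> has_derivative_fB[OF spd(2) f_grad] u_step]
      unfolding primal_residual_def by simp
    have "IQ *v (p1 - p0) = - al *s ?D u0 p0"
      unfolding p_step dual_residual_step
      by (simp add: matrix_vector_mult_scaleR scalar_mult_eq_scaleR
          linear_neg[OF matrix_vector_mul_linear]
          matrix_inv_cancel(1)[OF spd_invertible[OF spd(4)]])
    then show "IQ *v (p1 - p0) = - al *s ((?D u1 p1 - ?D ustar pstar)
        + (grad_hB B TU gh p0 - grad_hB B TU gh p1) + B *v (e_U TU gf u1 - e_U TU gf u0))"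
      unfolding residuals_vanish diff_zero unfolding dual_residual_def
      by (simp add: matrix_vector_mult_diff_distrib)
    show "mu_fB * mnorm2 IV (u1 - ustar) + mu_hB * mnorm2 IQ (p1 - pstar)
      \<le> 2 * ((?P u1 p1 - ?P ustar pstar) \<bullet> (u1 - ustar)
             + (?D u1 p1 - ?D ustar pstar) \<bullet> (p1 - pstar))"
      by (rule residuals_monotone[OF spd(1,2) gf_cocoercive gh_cocoercive
            grad_fB_mono grad_hB_mono])
    show "mnorm2 (matrix_inv IQ) (grad_hB B TU gh p0 - grad_hB B TU gh p1)
      \<le> L_hB\<^sup>2 * mnorm2 IQ (p1 - p0)"
      using grad_hB_lip[of p0 p1] by (simp add: mnorm2_minus_commute[of IQ p0])
    have "mnorm2 (matrix_inv IQ) (B *v (e_U TU gf u1 - e_U TU gf u0))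
      \<le> lam * (L_eU\<^sup>2 * mnorm2 IV (u1 - u0))"
      using B_bound order_trans mult_left_mono[OF e_U_lip \<open>0 \<le> lam\<close>] by blast
    then show "mnorm2 (matrix_inv IQ) (B *v (e_U TU gf u1 - e_U TU gf u0))
      \<le> L_eU\<^sup>2 * lam * mnorm2 IV (u1 - u0)"
      by (simp add: algebra_simps)
  qed (use \<open>0 \<le> lam\<close> in simp_all)
qed

lemma half_step_size:
  fixes mu L al m :: real
  assumes "0 < mu" and "0 < L" and "al = 0.5 * mu / L"
  shows "0 < al" and "al < mu / L" and "al * min m (mu - al * L) = 0.5 * mu * min m (mu / 2) / L"
proof -
  show "0 < al"
    using assms by simp
  show "al < mu / L"
    using assms by (simp add: field_simps)
  have "mu - al * L = mu / 2"
    using assms by simp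
  then show "al * min m (mu - al * L) = 0.5 * mu * min m (mu / 2) / L"
    using assms by simp
qed

theorem theorem5p6:
  fixes B :: "real^'m^'n"
    and f :: "real^'m \<Rightarrow> real" and gf :: "real^'m \<Rightarrow> real^'m"
    and h :: "real^'n \<Rightarrow> real" and gh :: "real^'n \<Rightarrow> real^'n"
    and TU IV :: "real^'m^'m" and TP IQ :: "real^'n^'n"
    and ustar :: "real^'m" and pstar :: "real^'n"
    and mu_h L_h mu_f L_f mu_fB mu_hB L_hB L_eU :: real
    and u :: "nat \<Rightarrow> real^'m" and p :: "nat \<Rightarrow> real^'n" and alpha :: "nat \<Rightarrow> real"
  assumes dims: "CARD('n) \<le> CARD('m)"
    and fullrank: "rank B = CARD('n)"
    and f_conv: "convex_on UNIV f" and h_conv: "convex_on UNIV h"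
    and f_grad: "\<And>x. (f has_derivative (\<lambda>d. gf x \<bullet> d)) (at x)"
    and h_grad: "\<And>x. (h has_derivative (\<lambda>d. gh x \<bullet> d)) (at x)"
    and gf_cont: "continuous_on UNIV gf" and gh_cont: "continuous_on UNIV gh"
    and gf_lip: "\<exists>L. \<forall>x y. norm (gf x - gf y) \<le> L * norm (x - y)"
    and gh_lip: "\<exists>L. \<forall>x y. norm (gh x - gh y) \<le> L * norm (x - y)"
    and saddle1: "gf ustar + transpose B *v pstar = 0"
    and saddle2: "B *v ustar = gh pstar"
    and spd_TU: "spd TU" and spd_IV: "spd IV" and spd_TP: "spd TP" and spd_IQ: "spd IQ"
    and h_S11: "S11 h gh TP mu_h L_h" and L_h_le: "L_h \<le> 1"
    and f_S11: "S11 f gf TU mu_f L_f" and L_f_le: "L_f \<le> 1"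
    and fB_sc: "strongly_convex_wrt IV mu_fB
                  (\<lambda>v. f v + 1/2 * (((transpose B ** matrix_inv TP ** B) *v v) \<bullet> v))"
    and mu_fB_pos: "mu_fB > 0"
    and hB_sc: "strongly_convex_wrt IQ mu_hB
                  (\<lambda>q. h q + 1/2 * (((B ** matrix_inv TU ** transpose B) *v q) \<bullet> q))"
    and mu_hB_pos: "mu_hB > 0"
    and L_hB_nonneg: "L_hB \<ge> 0"
    and L_hB_lip: "\<And>p1 p2. mnorm2 (matrix_inv IQ)
                      ((gh p1 + (B ** matrix_inv TU ** transpose B) *v p1)
                       - (gh p2 + (B ** matrix_inv TU ** transpose B) *v p2))
                    \<le> L_hB\<^sup>2 * mnorm2 IQ (p1 - p2)"
    and L_eU_nonneg: "L_eU \<ge> 0"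
    and L_eU_lip: "\<And>u1 u2. mnorm2 IV ((u1 - matrix_inv TU *v gf u1) - (u2 - matrix_inv TU *v gf u2))
                    \<le> L_eU\<^sup>2 * mnorm2 IV (u1 - u2)"
    and step: "\<And>k. p (Suc k) = p k - alpha k *s (matrix_inv IQ *v
                      (gh (p k) - B *v (u k - matrix_inv TU *v (gf (u k) + transpose B *v p k))))"
    and argmin: "\<And>k v.
        (let ftil = (\<lambda>w. f w + 1/2 * (((transpose B ** matrix_inv TP ** B) *v w) \<bullet> w)
              + 1 / (2 * alpha k) * mnorm2 IV (w - u k + alpha k *s (matrix_inv IV *v (transpose B *v
                    (p (Suc k) - matrix_inv TP *v gh (p (Suc k)))))))
         in ftil (u (Suc k)) \<le> ftil v)"
  defines "E \<equiv> (\<lambda>uu pp. 1/2 * mnorm2 IV (uu - ustar) + 1/2 * mnorm2 IQ (pp - pstar))"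
    and "LSQ2 \<equiv> L_hB\<^sup>2 + L_eU\<^sup>2 * lambda_max (matrix_inv IQ ** B ** matrix_inv IV ** transpose B)"
  shows "(\<forall>k. 0 < alpha k \<and> alpha k < mu_hB / LSQ2 \<longrightarrow>
            E (u (Suc k)) (p (Suc k))
              \<le> 1 / (1 + alpha k * min mu_fB (mu_hB - alpha k * LSQ2)) * E (u k) (p k))
       \<and> (\<forall>k. alpha k = 0.5 * mu_hB / LSQ2 \<longrightarrow>
            E (u (Suc k)) (p (Suc k))
              \<le> 1 / (1 + 0.5 * mu_hB * min mu_fB (mu_hB / 2) / LSQ2) * E (u k) (p k))"
proof -
  note lam = mnorm2_matrix_inv_le_lambda_max[OF spd_IQ spd_IV, of B]
  have grad_hB_mono:
    "mu_hB * mnorm2 IQ (x - y) \<le> (grad_hB B TU gh x - grad_hB B TU gh y) \<bullet> (x - y)" for x y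
    using has_derivative_hB[OF spd_TU h_grad]
    by (rule strongly_convex_wrt_gradient_monotone[OF hB_sc spd_symmetric[OF spd_IQ]])
  have grad_hB_lip:
    "mnorm2 (matrix_inv IQ) (grad_hB B TU gh x - grad_hB B TU gh y) \<le> L_hB\<^sup>2 * mnorm2 IQ (x - y)"
    for x y
    unfolding grad_hB_def by (rule L_hB_lip)
  have "0 < LSQ2"
    using strongly_monotone_le_lipschitz[OF spd_IQ L_hB_nonneg grad_hB_mono grad_hB_lip] mu_hB_pos lam(1)
    unfolding LSQ2_def by (intro add_pos_nonneg) auto
  have one_step: "E (u (Suc k)) (p (Suc k))
      \<le> 1 / (1 + alpha k * min mu_fB (mu_hB - alpha k * LSQ2)) * E (u k) (p k)"
    if "0 < alpha k" and "alpha k < mu_hB / LSQ2" for k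
  proof -
    have "0 < min mu_fB (mu_hB - alpha k * LSQ2)"
      using that \<open>0 < LSQ2\<close> mu_fB_pos by (simp add: field_simps)
    then show ?thesis
      unfolding E_def LSQ2_def
      by (rule primal_dual_step_contraction[OF spd_TU spd_TP spd_IV spd_IQ f_grad
            S11_gradient_cocoercive[OF spd_TU f_conv f_grad f_S11 L_f_le]
            S11_gradient_cocoercive[OF spd_TP h_conv h_grad h_S11 L_h_le]
            strongly_convex_wrt_gradient_monotone[OF fB_sc spd_symmetric[OF spd_IV]
              has_derivative_fB[OF spd_TP f_grad]]
            grad_hB_mono grad_hB_lip L_eU_lip[folded e_U_def] lam saddle1 saddle2 that(1) _
            step argmin[unfolded Let_def]])
  qed
  show ?thesis
  proof (intro conjI allI impI)
    fix k assume "0 < alpha k \<and> alpha k < mu_hB / LSQ2"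
    then show "E (u (Suc k)) (p (Suc k))
        \<le> 1 / (1 + alpha k * min mu_fB (mu_hB - alpha k * LSQ2)) * E (u k) (p k)"
      using one_step by blast
  next
    fix k assume "alpha k = 0.5 * mu_hB / LSQ2"
    from half_step_size[OF mu_hB_pos \<open>0 < LSQ2\<close> this] one_step[of k]
    show "E (u (Suc k)) (p (Suc k))
        \<le> 1 / (1 + 0.5 * mu_hB * min mu_fB (mu_hB / 2) / LSQ2) * E (u k) (p k)"
      by simp
  qed
qed

end
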